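(* Let $(q_l)_{l\ge1}$ be positive numbers with $q_1=1$ and $0<R:=\lim_{l\to\infty}q_l/q_{l+1}<\infty$, and assume (EQ): $\tilde f(1)>1$, or $\tilde f(1)=1$ and $\tilde g(1)<\infty$. Let $\rho^*>0$. Then the infimum $$\tilde A_{\min}=\inf\{\tilde A(z):\ z\in X_{0+},\ \rho(z)=\rho^*\}$$ is attained, and a minimizer is $z^*_l=N^*\tilde q_l(\mu^* )^l$, $l\in\mathbb{N}$, where $\mu^*\in(0,1]$ is the unique solution of $\tilde f(\mu^* )=1$ and $N^*=\rho^*/\tilde g(\mu^* )$.
   Context: $X=\{z=(z_l)_{l\ge1}:\sum_l l|z_l|<\infty\}$, $X_{0+}$ its nonnegative elements, $\rho(z)=\sum_l lz_l$, $N(z)=\sum_l z_l$. Set $\tilde q_l=q_lR^l$, $\tilde f(\mu)=\sum_{l\ge1}\tilde q_l\mu^l$, $\tilde g(\mu)=\sum_{l\ge1}l\tilde q_l\mu^l$, $\tilde f(1)=\sum_l\tilde q_l\in(0,\infty]$, $\tilde g(1)=\sum_l l\tilde q_l\in(0,\infty]$. For $z\in X_{0+}\setminus\{0\}$, $\tilde A(z)=\sum_l z_l\ln\big(z_l/(\tilde q_lN(z))\big)$ with $0\ln0=0$, and $\tilde A(0)=0$. *)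

theory Defs
  imports Complex_Main
begin

(* Sequences (z_l)_{l>=1} are encoded as functions nat => real; index 0 is unused
   (forced to 0 for elements of X_{0+}). *)

definition qt :: "(nat \<Rightarrow> real) \<Rightarrow> real \<Rightarrow> nat \<Rightarrow> real" where
  "qt q R l = q l * R ^ l"

definition Nsum :: "(nat \<Rightarrow> real) \<Rightarrow> real" where
  "Nsum z = (\<Sum>l. z l)"

definition rho :: "(nat \<Rightarrow> real) \<Rightarrow> real" where
  "rho z = (\<Sum>l. real l * z l)"

definition X0plus :: "(nat \<Rightarrow> real) set" where
  "X0plus = {z. z 0 = 0 \<and> (\<forall>l. 0 \<le> z l) \<and> summable (\<lambda>l. real l * \<bar>z l\<bar>)}"

(* tilde A, with the convention 0 ln 0 = 0 and tilde A(0) = 0 *)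
definition Atilde :: "(nat \<Rightarrow> real) \<Rightarrow> real \<Rightarrow> (nat \<Rightarrow> real) \<Rightarrow> real" where
  "Atilde q R z = (if (\<forall>l. z l = 0) then 0 else
     (\<Sum>l. if l = 0 \<or> z l = 0 then 0 else z l * ln (z l / (qt q R l * Nsum z))))"

(* tilde f(mu) = sum_{l>=1} qt_l mu^l  (only meaningful when summable) *)
definition ft :: "(nat \<Rightarrow> real) \<Rightarrow> real \<Rightarrow> real \<Rightarrow> real" where
  "ft q R \<mu> = (\<Sum>l. qt q R (Suc l) * \<mu> ^ Suc l)"

definition gt :: "(nat \<Rightarrow> real) \<Rightarrow> real \<Rightarrow> real \<Rightarrow> real" where
  "gt q R \<mu> = (\<Sum>l. real (Suc l) * qt q R (Suc l) * \<mu> ^ Suc l)"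

(* Condition (EQ): tilde f(1) > 1 (including = infinity), or tilde f(1) = 1 and tilde g(1) < infinity *)
definition EQ_cond :: "(nat \<Rightarrow> real) \<Rightarrow> real \<Rightarrow> bool" where
  "EQ_cond q R \<longleftrightarrow>
     \<not> summable (\<lambda>l. qt q R (Suc l))
     \<or> (summable (\<lambda>l. qt q R (Suc l)) \<and> (\<Sum>l. qt q R (Suc l)) > 1)
     \<or> (summable (\<lambda>l. qt q R (Suc l)) \<and> (\<Sum>l. qt q R (Suc l)) = 1
         \<and> summable (\<lambda>l. real (Suc l) * qt q R (Suc l)))"

end

theory Submission
  imports Defs "HOL-Analysis.Summation_Tests"
begin

(* Put p_l = N q~_l mu^l with f~(mu) = 1, so that sum_l p_l = N = N(z). Then
   z_l ln(z_l / (q~_l N)) = z_l ln(z_l / p_l) + l z_l ln mu, and Gibbs' inequality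
   x ln(x/y) >= x - y bounds the first part below by z_l - p_l, which sums to 0. Hence
   A~(z) >= rho(z) ln mu on X_{0+}, with equality when z_l = p_l, i.e. for z^*.
   The ratio hypothesis makes q~ the coefficients of a power series of radius 1 with
   |ln q~_l| = O(l); the latter, together with the summability of z_l ln z_l, makes the
   series A~(z) converge. The root mu^* exists by the intermediate value theorem, since
   (EQ) forces f~ above 1 somewhere in (0,1) unless f~(1) = 1, and it is unique because
   f~ is strictly increasing. *)

lemma diff_le_mult_ln_div:
  fixes x y :: real
  assumes "0 < x" "0 < y"
  shows "x - y \<le> x * ln (x / y)"
proof -
  have "x * ln (y / x) \<le> x * (y / x - 1)"
    using assms by (intro mult_left_mono ln_le_minus_one) auto
  then show ?thesis
    using assms by (simp add: ln_div algebra_simps)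
qed

lemma minus_mult_ln_le_sqrt:
  fixes x :: real
  assumes "0 < x"
  shows "- (x * ln x) \<le> 2 * sqrt x"
proof -
  have s: "0 < sqrt x" using assms by simp
  have ln_sqrt_le: "- ln (sqrt x) \<le> 1 / sqrt x - 1"
    using ln_le_minus_one[of "1 / sqrt x"] s by (simp add: ln_div)
  have "- (x * ln x) = 2 * x * (- ln (sqrt x))"
    using assms by (simp add: ln_sqrt)
  also have "\<dots> \<le> 2 * x * (1 / sqrt x - 1)"
    using assms ln_sqrt_le by (intro mult_left_mono) auto
  also have "\<dots> \<le> 2 * (x / sqrt x)"
    using assms by (simp add: right_diff_distrib)
  also have "\<dots> = 2 * sqrt x"
    using assms by (simp add: real_div_sqrt)
  finally show ?thesis .
qed

(* The regimes x \<ge> 1, e^-l \<le> x < 1 and x < e^-l give a majorant that is summable in l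
   along any z \<in> X0plus (with B = rho z). *)
lemma abs_mult_ln_le:
  fixes x B :: real
  assumes "0 \<le> x" "x \<le> B"
  shows "\<bar>x * ln x\<bar> \<le> (real l + B) * x + 2 * exp (-1/2) ^ l"
proof -
  have e: "0 \<le> exp (-1/2::real) ^ l" by simp
  consider "x = 0" | "1 \<le> x" | "exp (- real l) \<le> x" "x < 1" | "0 < x" "x < exp (- real l)"
    using assms(1) by force
  then show ?thesis
  proof cases
    case 1
    then show ?thesis by simp
  next
    case 2
    have "\<bar>x * ln x\<bar> = x * ln x"
      using 2 by simp
    also have "\<dots> \<le> x * (x - 1)"
      using 2 by (intro mult_left_mono ln_le_minus_one) auto
    also have "\<dots> \<le> x * B"
      using 2 assms by (intro mult_left_mono) auto
    also have "\<dots> \<le> (real l + B) * x + 2 * exp (-1/2) ^ l"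
      using assms e mult_nonneg_nonneg[of "real l" x] by (simp add: algebra_simps)
    finally show ?thesis .
  next
    case 3
    have "0 < x" using 3 by (meson exp_gt_zero less_le_trans)
    then have "- real l \<le> ln x" "ln x < 0"
      using 3 by (auto simp flip: ln_le_cancel_iff)
    then have "\<bar>x * ln x\<bar> = x * (- ln x)"
      using \<open>0 < x\<close> by (simp add: abs_mult)
    also have "\<dots> \<le> x * real l"
      using \<open>0 < x\<close> \<open>- real l \<le> ln x\<close> by (intro mult_left_mono) auto
    finally have "\<bar>x * ln x\<bar> \<le> real l * x"
      by (simp add: mult.commute)
    moreover have "0 \<le> B * x"
      using assms by simp
    ultimately show ?thesis
      using e unfolding distrib_right by linarith
  next
    case 4
    have "exp (- real l) \<le> 1" by simp
    then have "ln x < 0"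
      using 4 by (intro ln_less_zero) linarith+
    have "exp (- real l) = (exp (-1/2) ^ l)\<^sup>2"
      by (simp flip: exp_of_nat_mult exp_add power2_eq_square)
    then have "sqrt (exp (- real l)) = exp (-1/2) ^ l"
      by simp
    then have "sqrt x \<le> exp (-1/2) ^ l"
      using 4 real_sqrt_le_mono[of x "exp (- real l)"] by simp
    then have "\<bar>x * ln x\<bar> \<le> 2 * exp (-1/2) ^ l"
      using minus_mult_ln_le_sqrt[OF \<open>0 < x\<close>] \<open>ln x < 0\<close> \<open>0 < x\<close>
      by (simp add: abs_mult)
    moreover have "0 \<le> (real l + B) * x"
      using assms by simp
    ultimately show ?thesis
      by linarith
  qed
qed

lemma linear_bound_of_eventually_bounded_increments:
  fixes x :: "nat \<Rightarrow> real"
  assumes "eventually (\<lambda>n. \<bar>x (Suc n) - x n\<bar> \<le> 1) sequentially"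
  shows "\<exists>C. \<forall>n. \<bar>x n\<bar> \<le> C + real n"
proof -
  obtain M where M: "\<And>n. M \<le> n \<Longrightarrow> \<bar>x (Suc n) - x n\<bar> \<le> 1"
    using assms by (auto simp: eventually_sequentially)
  have drift: "\<bar>x (M + k) - x M\<bar> \<le> real k" for k
  proof (induction k)
    case (Suc k)
    have "\<bar>x (Suc (M + k)) - x (M + k)\<bar> \<le> 1"
      by (rule M) simp
    with Suc show ?case by simp
  qed simp
  define C where "C = (\<Sum>k\<le>M. \<bar>x k\<bar>)"
  have initial: "\<bar>x k\<bar> \<le> C" if "k \<le> M" for k
    unfolding C_def by (rule member_le_sum) (use that in auto)
  have "\<bar>x n\<bar> \<le> C + real n" for n
  proof (cases "n \<le> M")
    case False
    then obtain k where "n = M + k"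
      using le_Suc_ex nat_le_linear by blast
    then show ?thesis
      using drift[of k] initial[of M] by simp
  qed (use initial in force)
  then show ?thesis by blast
qed

lemma abs_ln_le_linear_of_ratio_tendsto_1:
  fixes a :: "nat \<Rightarrow> real"
  assumes pos: "\<And>n. 0 < a n" and ratio: "(\<lambda>n. a n / a (Suc n)) \<longlonglongrightarrow> 1"
  shows "\<exists>C. \<forall>n. \<bar>ln (a n)\<bar> \<le> C + real n"
proof (rule linear_bound_of_eventually_bounded_increments)
  have "(\<lambda>n. ln (a n / a (Suc n))) \<longlonglongrightarrow> ln 1"
    using ratio by (intro tendsto_ln) auto
  then have "eventually (\<lambda>n. \<bar>ln (a n / a (Suc n))\<bar> < 1) sequentially"
    by (auto simp: tendsto_iff dist_real_def)
  then show "eventually (\<lambda>n. \<bar>ln (a (Suc n)) - ln (a n)\<bar> \<le> 1) sequentially"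
  proof eventually_elim
    case (elim n)
    then show ?case
      using pos[of n] pos[of "Suc n"] by (simp add: ln_div abs_minus_commute)
  qed
qed

lemma conv_radius_eq_1_of_ratio_tendsto_1:
  fixes a :: "nat \<Rightarrow> real"
  assumes pos: "\<And>n. 0 < a n" and ratio: "(\<lambda>n. a n / a (Suc n)) \<longlonglongrightarrow> 1"
  shows "conv_radius a = 1"
  using ratio pos by (intro conv_radius_ratio_limit_nonzero[of _ 1]) (simp_all add: less_imp_le)

lemma ratio_tendsto_1_mult_Suc:
  fixes a :: "nat \<Rightarrow> real"
  assumes "(\<lambda>n. a n / a (Suc n)) \<longlonglongrightarrow> 1"
  shows "(\<lambda>n. (real (Suc n) * a n) / (real (Suc (Suc n)) * a (Suc n))) \<longlonglongrightarrow> 1"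
proof -
  have "(\<lambda>n. real (Suc n) / real (Suc (Suc n))) \<longlonglongrightarrow> 1"
    using LIMSEQ_Suc[OF LIMSEQ_n_over_Suc_n] by simp
  from tendsto_mult[OF this assms] show ?thesis
    by simp
qed

lemma X0plus_nonneg: "z \<in> X0plus \<Longrightarrow> 0 \<le> z l"
  and X0plus_at_0: "z \<in> X0plus \<Longrightarrow> z 0 = 0"
  and X0plus_summable_rho: "z \<in> X0plus \<Longrightarrow> summable (\<lambda>l. real l * z l)"
  by (auto simp: X0plus_def)

lemma X0plus_le_of_nat_mult: "z \<in> X0plus \<Longrightarrow> z l \<le> real l * z l"
  by (cases l) (auto simp: X0plus_at_0 X0plus_nonneg distrib_right)

lemma X0plus_summable: "z \<in> X0plus \<Longrightarrow> summable z"
  by (rule summable_comparison_test'[OF X0plus_summable_rho])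
    (auto simp: X0plus_nonneg X0plus_le_of_nat_mult)

lemma X0plus_le_rho:
  assumes "z \<in> X0plus"
  shows "z l \<le> rho z"
proof -
  have "real l * z l \<le> rho z"
    unfolding rho_def using assms
    by (intro sum_le_suminf[of _ "{l}", simplified]) (auto simp: X0plus_summable_rho X0plus_nonneg)
  with X0plus_le_of_nat_mult[OF assms, of l] show ?thesis
    by linarith
qed

lemma X0plus_summable_abs_mult_ln:
  assumes "z \<in> X0plus"
  shows "summable (\<lambda>l. \<bar>z l * ln (z l)\<bar>)"
proof (rule summable_comparison_test')
  show "summable (\<lambda>l. (real l + rho z) * z l + 2 * exp (-1/2) ^ l)"
    unfolding distrib_right using assms
    by (intro summable_add summable_mult summable_geometric X0plus_summable_rho X0plus_summable) auto
  show "norm \<bar>z l * ln (z l)\<bar> \<le> (real l + rho z) * z l + 2 * exp (-1/2) ^ l" for l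
    using abs_mult_ln_le[OF X0plus_nonneg[OF assms] X0plus_le_rho[OF assms], of l l] by simp
qed

lemma Nsum_pos:
  assumes "z \<in> X0plus" "z l \<noteq> 0"
  shows "0 < Nsum z"
  unfolding Nsum_def using assms
  by (intro suminf_pos2[of _ l]) (auto simp: X0plus_summable X0plus_nonneg order_less_le)

definition equilibrium :: "(nat \<Rightarrow> real) \<Rightarrow> real \<Rightarrow> real \<Rightarrow> real \<Rightarrow> nat \<Rightarrow> real" where
  "equilibrium q R N \<mu> l = (if l = 0 then 0 else N * qt q R l * \<mu> ^ l)"

lemma equilibrium_sums:
  assumes "summable (\<lambda>l. qt q R (Suc l) * \<mu> ^ Suc l)"
  shows "equilibrium q R N \<mu> sums (N * ft q R \<mu>)"
proof -
  have "(\<lambda>l. N * (qt q R (Suc l) * \<mu> ^ Suc l)) sums (N * ft q R \<mu>)"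
    unfolding ft_def by (intro sums_mult summable_sums assms)
  then have "(\<lambda>l. equilibrium q R N \<mu> (Suc l)) sums (N * ft q R \<mu>)"
    by (simp add: equilibrium_def mult.assoc)
  from sums_Suc_iff[THEN iffD1, OF this] show ?thesis
    by (simp add: equilibrium_def[of q R N \<mu> 0])
qed

lemma of_nat_mult_equilibrium_sums:
  assumes "summable (\<lambda>l. real (Suc l) * qt q R (Suc l) * \<mu> ^ Suc l)"
  shows "(\<lambda>l. real l * equilibrium q R N \<mu> l) sums (N * gt q R \<mu>)"
proof -
  have "(\<lambda>l. N * (real (Suc l) * qt q R (Suc l) * \<mu> ^ Suc l)) sums (N * gt q R \<mu>)"
    unfolding gt_def by (intro sums_mult summable_sums assms)
  then have "(\<lambda>l. real (Suc l) * equilibrium q R N \<mu> (Suc l)) sums (N * gt q R \<mu>)"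
    by (simp add: equilibrium_def mult_ac)
  from sums_Suc_iff[THEN iffD1, OF this] show ?thesis
    by (simp add: equilibrium_def[of q R N \<mu> 0])
qed

lemma rho_equilibrium:
  assumes "summable (\<lambda>l. real (Suc l) * qt q R (Suc l) * \<mu> ^ Suc l)"
  shows "rho (equilibrium q R N \<mu>) = N * gt q R \<mu>"
  using of_nat_mult_equilibrium_sums[OF assms] by (simp add: rho_def sums_iff)

locale unit_radius_weights =
  fixes q :: "nat \<Rightarrow> real" and R :: real
  assumes q_pos: "\<And>l. 1 \<le> l \<Longrightarrow> 0 < q l"
    and ratio_tendsto: "(\<lambda>l. q l / q (Suc l)) \<longlonglongrightarrow> R"
    and R_pos: "0 < R"
begin

lemma qt_pos: "1 \<le> l \<Longrightarrow> 0 < qt q R l"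
  using q_pos R_pos by (simp add: qt_def)

lemma qt_ratio_tendsto_1: "(\<lambda>l. qt q R (Suc l) / qt q R (Suc (Suc l))) \<longlonglongrightarrow> 1"
proof -
  have "(\<lambda>l. q (Suc l) / q (Suc (Suc l)) / R) \<longlonglongrightarrow> R / R"
    using LIMSEQ_Suc[OF ratio_tendsto] R_pos by (intro tendsto_divide tendsto_const) auto
  moreover have "qt q R (Suc l) / qt q R (Suc (Suc l)) = q (Suc l) / q (Suc (Suc l)) / R" for l
    using R_pos q_pos[of "Suc (Suc l)"] by (simp add: qt_def field_simps)
  ultimately show ?thesis
    using R_pos by simp
qed

lemma conv_radius_qt: "conv_radius (\<lambda>l. qt q R (Suc l)) = 1"
  by (rule conv_radius_eq_1_of_ratio_tendsto_1) (use qt_pos qt_ratio_tendsto_1 in auto)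

lemma conv_radius_of_nat_mult_qt: "conv_radius (\<lambda>l. real (Suc l) * qt q R (Suc l)) = 1"
  by (rule conv_radius_eq_1_of_ratio_tendsto_1)
    (use qt_pos ratio_tendsto_1_mult_Suc[OF qt_ratio_tendsto_1] in auto)

lemma summable_ft_series:
  assumes "\<bar>\<mu>\<bar> < 1"
  shows "summable (\<lambda>l. qt q R (Suc l) * \<mu> ^ Suc l)"
proof -
  have "summable (\<lambda>l. qt q R (Suc l) * \<mu> ^ l)"
    using assms by (intro summable_in_conv_radius) (simp add: conv_radius_qt)
  from summable_mult2[OF this, of \<mu>] show ?thesis
    by (simp add: mult_ac)
qed

lemma summable_gt_series:
  assumes "\<bar>\<mu>\<bar> < 1"
  shows "summable (\<lambda>l. real (Suc l) * qt q R (Suc l) * \<mu> ^ Suc l)"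
proof -
  have "summable (\<lambda>l. real (Suc l) * qt q R (Suc l) * \<mu> ^ l)"
    using assms conv_radius_of_nat_mult_qt by (intro summable_in_conv_radius) simp
  from summable_mult2[OF this, of \<mu>] show ?thesis
    by (simp add: mult_ac)
qed

lemma isCont_ft:
  assumes "\<bar>x\<bar> < 1"
  shows "isCont (ft q R) x"
proof -
  define K where "K = (1 + \<bar>x\<bar>) / 2"
  have K: "\<bar>x\<bar> < K" "K < 1"
    using assms by (auto simp: K_def)
  have "summable (\<lambda>l. qt q R (Suc l) * K ^ l)"
    using K by (intro summable_in_conv_radius) (simp add: conv_radius_qt)
  then have cont: "isCont (\<lambda>y. y * (\<Sum>l. qt q R (Suc l) * y ^ l)) x"
    using K by (intro continuous_intros isCont_powser) auto
  moreover have ev: "eventually (\<lambda>y. ft q R y = y * (\<Sum>l. qt q R (Suc l) * y ^ l)) (nhds x)"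
  proof -
    have "eventually (\<lambda>y. y \<in> {-1<..<1}) (nhds x)"
      using assms by (intro eventually_nhds_in_open) auto
    then show ?thesis
    proof eventually_elim
      case (elim y)
      then have "summable (\<lambda>l. qt q R (Suc l) * y ^ l)"
        by (intro summable_in_conv_radius) (auto simp: conv_radius_qt)
      then show ?case
        unfolding ft_def by (simp flip: suminf_mult add: mult_ac)
    qed
  qed
  ultimately show ?thesis
    using isCont_cong[OF ev] cont by simp
qed

lemma ft_strict_mono:
  assumes "0 \<le> \<mu>" "\<mu> < \<nu>"
    and "summable (\<lambda>l. qt q R (Suc l) * \<mu> ^ Suc l)"
    and "summable (\<lambda>l. qt q R (Suc l) * \<nu> ^ Suc l)"
  shows "ft q R \<mu> < ft q R \<nu>"
proof -
  let ?d = "\<lambda>l. qt q R (Suc l) * \<nu> ^ Suc l - qt q R (Suc l) * \<mu> ^ Suc l"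
  have "0 < suminf ?d"
  proof (rule suminf_pos2)
    show "0 \<le> ?d l" for l
    proof -
      have "\<mu> ^ Suc l \<le> \<nu> ^ Suc l"
        using assms by (intro power_mono) auto
      from mult_left_mono[OF this less_imp_le[OF qt_pos[of "Suc l"]]] show ?thesis
        by simp
    qed
    show "0 < ?d 0"
      using assms qt_pos[of 1] by simp
  qed (use assms in \<open>intro summable_diff\<close>)
  then show ?thesis
    unfolding ft_def using suminf_diff[OF assms(4,3)] by simp
qed

lemma ft_gt_1_below_1:
  assumes "\<not> summable (\<lambda>l. qt q R (Suc l)) \<or> 1 < (\<Sum>l. qt q R (Suc l))"
  shows "\<exists>b. 0 < b \<and> b < 1 \<and> 1 < ft q R b"
proof -
  have nonneg: "0 \<le> qt q R (Suc l)" for l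
    using qt_pos[of "Suc l"] by simp
  obtain n where n: "1 < (\<Sum>l<n. qt q R (Suc l))"
  proof (cases "summable (\<lambda>l. qt q R (Suc l))")
    case True
    then have "eventually (\<lambda>n. 1 < (\<Sum>l<n. qt q R (Suc l))) sequentially"
      using assms by (intro order_tendstoD(1)[OF summable_LIMSEQ]) auto
    then show ?thesis
      using that by (auto simp: eventually_sequentially)
  next
    case False
    then have "\<not> (\<forall>n. (\<Sum>l<n. qt q R (Suc l)) \<le> 1)"
      using summableI_nonneg_bounded[of "\<lambda>l. qt q R (Suc l)" 1] nonneg by auto
    then show ?thesis
      using that by (auto simp: not_le)
  qed
  define P where "P x = (\<Sum>l<n. qt q R (Suc l) * x ^ Suc l)" for x :: real
  have "(P \<longlongrightarrow> P 1) (at_left 1)"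
    unfolding P_def by (intro tendsto_intros)
  moreover have "1 < P 1"
    using n by (simp add: P_def)
  ultimately have "eventually (\<lambda>x. 1 < P x) (at_left 1)"
    by (simp add: order_tendstoD(1))
  moreover have "eventually (\<lambda>x. x \<in> {0<..<1}) (at_left (1::real))"
    by (rule eventually_at_left_real) simp
  ultimately obtain b where b: "1 < P b" "0 < b" "b < 1"
    using eventually_happens'[OF trivial_limit_at_left_real eventually_conj] by fastforce
  have "P b \<le> ft q R b"
    unfolding P_def ft_def using b nonneg
    by (intro sum_le_suminf summable_ft_series) auto
  with b show ?thesis
    by auto
qed

lemma ft_eq_1_exists:
  assumes "EQ_cond q R"
  shows "\<exists>\<mu>. 0 < \<mu> \<and> \<mu> \<le> 1 \<and> summable (\<lambda>l. qt q R (Suc l) * \<mu> ^ Suc l) \<and> ft q R \<mu> = 1"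
proof (cases "summable (\<lambda>l. qt q R (Suc l)) \<and> (\<Sum>l. qt q R (Suc l)) = 1")
  case True
  then show ?thesis
    by (intro exI[of _ 1]) (simp add: ft_def)
next
  case False
  with assms have "\<not> summable (\<lambda>l. qt q R (Suc l)) \<or> 1 < (\<Sum>l. qt q R (Suc l))"
    unfolding EQ_cond_def by auto
  then obtain b where b: "0 < b" "b < 1" "1 < ft q R b"
    using ft_gt_1_below_1 by blast
  have "ft q R 0 = 0"
    by (simp add: ft_def)
  moreover have "\<forall>x. 0 \<le> x \<and> x \<le> b \<longrightarrow> isCont (ft q R) x"
    using b by (auto intro: isCont_ft)
  ultimately obtain \<mu> where \<mu>: "0 \<le> \<mu>" "\<mu> \<le> b" "ft q R \<mu> = 1"
    using IVT[of "ft q R" 0 1 b] b by auto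
  with \<open>ft q R 0 = 0\<close> have "\<mu> \<noteq> 0"
    by auto
  moreover have "summable (\<lambda>l. qt q R (Suc l) * \<mu> ^ Suc l)"
    using \<mu> b by (intro summable_ft_series) auto
  ultimately show ?thesis
    using \<mu> b by (intro exI[of _ \<mu>]) auto
qed

lemma ft_eq_1_unique:
  assumes "0 < \<mu>" "summable (\<lambda>l. qt q R (Suc l) * \<mu> ^ Suc l)" "ft q R \<mu> = 1"
    and "0 < \<nu>" "summable (\<lambda>l. qt q R (Suc l) * \<nu> ^ Suc l)" "ft q R \<nu> = 1"
  shows "\<mu> = \<nu>"
  using ft_strict_mono[of \<mu> \<nu>] ft_strict_mono[of \<nu> \<mu>] assms by (cases \<mu> \<nu> rule: linorder_cases) auto

lemma summable_gt_series_at_root: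
  assumes "EQ_cond q R" "0 < \<mu>" "\<mu> \<le> 1"
    and "summable (\<lambda>l. qt q R (Suc l) * \<mu> ^ Suc l)" "ft q R \<mu> = 1"
  shows "summable (\<lambda>l. real (Suc l) * qt q R (Suc l) * \<mu> ^ Suc l)"
proof (cases "\<mu> = 1")
  case True
  then show ?thesis
    using assms by (auto simp: EQ_cond_def ft_def)
next
  case False
  with assms show ?thesis
    by (intro summable_gt_series) auto
qed

lemma gt_pos:
  assumes "0 < \<mu>" "summable (\<lambda>l. real (Suc l) * qt q R (Suc l) * \<mu> ^ Suc l)"
  shows "0 < gt q R \<mu>"
  unfolding gt_def using assms qt_pos by (intro suminf_pos) auto

lemma equilibrium_pos: "0 < N \<Longrightarrow> 0 < \<mu> \<Longrightarrow> 1 \<le> l \<Longrightarrow> 0 < equilibrium q R N \<mu> l"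
  using qt_pos by (simp add: equilibrium_def)

lemma equilibrium_nonneg: "0 < N \<Longrightarrow> 0 < \<mu> \<Longrightarrow> 0 \<le> equilibrium q R N \<mu> l"
  using equilibrium_pos[of N \<mu> l] by (cases l) (auto simp: equilibrium_def)

lemma equilibrium_in_X0plus:
  assumes "0 < N" "0 < \<mu>" "summable (\<lambda>l. real (Suc l) * qt q R (Suc l) * \<mu> ^ Suc l)"
  shows "equilibrium q R N \<mu> \<in> X0plus"
  using assms of_nat_mult_equilibrium_sums[OF assms(3), of N] equilibrium_nonneg[OF assms(1,2)]
  by (auto simp: X0plus_def equilibrium_def sums_iff)

lemma abs_ln_qt_le: "\<exists>C. \<forall>l\<ge>1. \<bar>ln (qt q R l)\<bar> \<le> C + real l"
proof -
  obtain C where C: "\<And>n. \<bar>ln (qt q R (Suc n))\<bar> \<le> C + real n"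
    using abs_ln_le_linear_of_ratio_tendsto_1[of "\<lambda>n. qt q R (Suc n)"] qt_pos qt_ratio_tendsto_1
    by auto
  have "\<bar>ln (qt q R l)\<bar> \<le> C + real l" if "1 \<le> l" for l
    using C[of "l - 1"] that by simp
  then show ?thesis
    by blast
qed

lemma summable_Atilde_terms:
  assumes z: "z \<in> X0plus" and N: "0 < N"
  shows "summable (\<lambda>l. if l = 0 \<or> z l = 0 then 0 else z l * ln (z l / (qt q R l * N)))"
proof -
  obtain C where C: "\<And>l. 1 \<le> l \<Longrightarrow> \<bar>ln (qt q R l)\<bar> \<le> C + real l"
    using abs_ln_qt_le by blast
  show ?thesis
  proof (rule summable_comparison_test')
    show "summable (\<lambda>l. \<bar>z l * ln (z l)\<bar> + \<bar>C\<bar> * z l + \<bar>ln N\<bar> * z l + real l * z l)"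
      using z by (intro summable_add summable_mult X0plus_summable_abs_mult_ln X0plus_summable
          X0plus_summable_rho)
    show "norm (if l = 0 \<or> z l = 0 then 0 else z l * ln (z l / (qt q R l * N)))
        \<le> \<bar>z l * ln (z l)\<bar> + \<bar>C\<bar> * z l + \<bar>ln N\<bar> * z l + real l * z l" for l
    proof (cases "l = 0 \<or> z l = 0")
      case True
      then show ?thesis
        using X0plus_nonneg[OF z, of l] by simp
    next
      case False
      then have l: "1 \<le> l" and zl: "0 < z l"
        using X0plus_nonneg[OF z, of l] by auto
      have "z l * ln (z l / (qt q R l * N)) = z l * ln (z l) - z l * ln (qt q R l) - z l * ln N"
        using zl qt_pos[OF l] N by (simp add: ln_div ln_mult algebra_simps)
      moreover have "\<bar>z l * ln (qt q R l)\<bar> \<le> \<bar>C\<bar> * z l + real l * z l"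
        using C[OF l] zl by (simp add: abs_mult mult_left_mono flip: distrib_right)
      moreover have "\<bar>z l * ln N\<bar> = \<bar>ln N\<bar> * z l"
        using zl by (simp add: abs_mult)
      ultimately show ?thesis
        using False by auto
    qed
  qed
qed

lemma Atilde_ge_rho_mult_ln:
  assumes z: "z \<in> X0plus" and \<mu>: "0 < \<mu>"
    and summable_f: "summable (\<lambda>l. qt q R (Suc l) * \<mu> ^ Suc l)" and root: "ft q R \<mu> = 1"
  shows "rho z * ln \<mu> \<le> Atilde q R z"
proof (cases "\<forall>l. z l = 0")
  case True
  then show ?thesis
    by (simp add: rho_def Atilde_def)
next
  case False
  define N where "N = Nsum z"
  have N: "0 < N"
    using False Nsum_pos[OF z] by (auto simp: N_def)
  define t where "t l = (if l = 0 \<or> z l = 0 then 0 else z l * ln (z l / (qt q R l * N)))" for l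
  define p where "p = equilibrium q R N \<mu>"
  have "z sums N"
    using X0plus_summable[OF z] by (simp add: N_def Nsum_def summable_sums)
  moreover have "p sums N"
    using equilibrium_sums[OF summable_f, of N] root by (simp add: p_def)
  moreover have "(\<lambda>l. real l * z l) sums rho z"
    using X0plus_summable_rho[OF z] by (simp add: rho_def summable_sums)
  ultimately have lower_sums:
    "(\<lambda>l. z l - p l + ln \<mu> * (real l * z l)) sums (N - N + ln \<mu> * rho z)"
    by (intro sums_add sums_diff sums_mult)
  have t_summable: "summable t"
    unfolding t_def by (rule summable_Atilde_terms[OF z N])
  have lower_le: "z l - p l + ln \<mu> * (real l * z l) \<le> t l" for l
  proof (cases "l = 0 \<or> z l = 0")
    case True
    then show ?thesis
      using X0plus_at_0[OF z] equilibrium_nonneg[OF N \<mu>, of l] by (auto simp: t_def p_def)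
  next
    case False
    then have l: "1 \<le> l" and zl: "0 < z l"
      using X0plus_nonneg[OF z, of l] by auto
    have pl: "0 < p l"
      unfolding p_def by (rule equilibrium_pos[OF N \<mu> l])
    have ratio: "z l / (qt q R l * N) = z l / p l * \<mu> ^ l"
      using l \<mu> N qt_pos[OF l] by (simp add: p_def equilibrium_def)
    have "ln (z l / (qt q R l * N)) = ln (z l / p l) + ln (\<mu> ^ l)"
      unfolding ratio using zl pl \<mu> by (intro ln_mult_pos) auto
    then have "ln (z l / (qt q R l * N)) = ln (z l / p l) + real l * ln \<mu>"
      by (simp add: ln_realpow)
    then have "t l = z l * ln (z l / p l) + ln \<mu> * (real l * z l)"
      using False by (simp add: t_def algebra_simps)
    with diff_le_mult_ln_div[OF zl pl] show ?thesis
      by simp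
  qed
  have "N - N + ln \<mu> * rho z \<le> suminf t"
    using sums_le[OF lower_le lower_sums summable_sums[OF t_summable]] .
  moreover have "Atilde q R z = suminf t"
    unfolding Atilde_def t_def[abs_def] N_def using False by simp
  ultimately show ?thesis
    by (simp add: mult.commute)
qed

lemma Atilde_equilibrium:
  assumes N: "0 < N" and \<mu>: "0 < \<mu>"
    and summable_f: "summable (\<lambda>l. qt q R (Suc l) * \<mu> ^ Suc l)" and root: "ft q R \<mu> = 1"
    and summable_g: "summable (\<lambda>l. real (Suc l) * qt q R (Suc l) * \<mu> ^ Suc l)"
  shows "Atilde q R (equilibrium q R N \<mu>) = N * gt q R \<mu> * ln \<mu>"
proof -
  let ?z = "equilibrium q R N \<mu>"
  have "Nsum ?z = N"
    using equilibrium_sums[OF summable_f, of N] root by (simp add: Nsum_def sums_iff)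
  then have term_eq: "(if l = 0 \<or> ?z l = 0 then 0 else ?z l * ln (?z l / (qt q R l * Nsum ?z)))
      = ln \<mu> * (real l * ?z l)" for l
    using N \<mu> qt_pos[of l] by (cases "l = 0") (simp_all add: equilibrium_def ln_realpow)
  have "\<not> (\<forall>l. ?z l = 0)"
    using equilibrium_pos[OF N \<mu> order_refl] by (metis order_less_irrefl)
  then have "Atilde q R ?z = (\<Sum>l. ln \<mu> * (real l * ?z l))"
    by (simp add: Atilde_def term_eq)
  also have "\<dots> = ln \<mu> * (N * gt q R \<mu>)"
    using sums_mult[OF of_nat_mult_equilibrium_sums[OF summable_g], of "ln \<mu>"] by (simp add: sums_iff)
  finally show ?thesis
    by simp
qed

lemma equilibrium_minimizes_Atilde:
  assumes N: "0 < N" and \<mu>: "0 < \<mu>"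
    and summable_f: "summable (\<lambda>l. qt q R (Suc l) * \<mu> ^ Suc l)" and root: "ft q R \<mu> = 1"
    and summable_g: "summable (\<lambda>l. real (Suc l) * qt q R (Suc l) * \<mu> ^ Suc l)"
    and z: "z \<in> X0plus" "rho z = rho (equilibrium q R N \<mu>)"
  shows "Atilde q R (equilibrium q R N \<mu>) \<le> Atilde q R z"
proof -
  have "Atilde q R (equilibrium q R N \<mu>) = rho z * ln \<mu>"
    using Atilde_equilibrium[OF N \<mu> summable_f root summable_g] rho_equilibrium[OF summable_g] z(2)
    by simp
  also have "\<dots> \<le> Atilde q R z"
    by (rule Atilde_ge_rho_mult_ln[OF z(1) \<mu> summable_f root])
  finally show ?thesis .
qed

lemma equilibrium_minimizer:
  assumes EQ: "EQ_cond q R" and \<rho>: "0 < \<rho>"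
    and \<mu>: "0 < \<mu>" "\<mu> \<le> 1"
    and summable_f: "summable (\<lambda>l. qt q R (Suc l) * \<mu> ^ Suc l)" and root: "ft q R \<mu> = 1"
  defines "zs \<equiv> equilibrium q R (\<rho> / gt q R \<mu>) \<mu>"
  shows "zs \<in> X0plus \<and> rho zs = \<rho>
    \<and> (\<forall>z\<in>X0plus. rho z = \<rho> \<longrightarrow> Atilde q R zs \<le> Atilde q R z)
    \<and> Atilde q R zs = Inf {Atilde q R z | z. z \<in> X0plus \<and> rho z = \<rho>}"
proof -
  note summable_g = summable_gt_series_at_root[OF EQ \<mu> summable_f root]
  have N: "0 < \<rho> / gt q R \<mu>"
    using gt_pos[OF \<mu>(1) summable_g] \<rho> by simp
  have in_X0plus: "zs \<in> X0plus"
    unfolding zs_def by (rule equilibrium_in_X0plus[OF N \<mu>(1) summable_g])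
  have rho: "rho zs = \<rho>"
    unfolding zs_def using rho_equilibrium[OF summable_g] gt_pos[OF \<mu>(1) summable_g] by simp
  have minimal: "\<forall>z\<in>X0plus. rho z = \<rho> \<longrightarrow> Atilde q R zs \<le> Atilde q R z"
    using equilibrium_minimizes_Atilde[OF N \<mu>(1) summable_f root summable_g] rho
    unfolding zs_def by auto
  have "Inf {Atilde q R z | z. z \<in> X0plus \<and> rho z = \<rho>} = Atilde q R zs"
    by (rule cInf_eq_minimum) (use in_X0plus rho minimal in auto)
  with in_X0plus rho minimal show ?thesis
    by simp
qed

end

theorem theorem8:
  fixes q :: "nat \<Rightarrow> real" and R \<rho>s :: real
  assumes qpos: "\<forall>l\<ge>1. q l > 0"
    and q1: "q 1 = 1"
    and Rlim: "(\<lambda>l. q l / q (Suc l)) \<longlonglongrightarrow> R"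
    and Rpos: "0 < R"
    and EQ: "EQ_cond q R"
    and rhopos: "0 < \<rho>s"
  shows "(\<exists>!\<mu>. 0 < \<mu> \<and> \<mu> \<le> 1 \<and> summable (\<lambda>l. qt q R (Suc l) * \<mu> ^ Suc l) \<and> ft q R \<mu> = 1)
    \<and> (\<forall>\<mu>. 0 < \<mu> \<and> \<mu> \<le> 1 \<and> summable (\<lambda>l. qt q R (Suc l) * \<mu> ^ Suc l) \<and> ft q R \<mu> = 1 \<longrightarrow>
        (let Ns = \<rho>s / gt q R \<mu>;
             zs = (\<lambda>l. if l = 0 then 0 else Ns * qt q R l * \<mu> ^ l)
         in zs \<in> X0plus \<and> rho zs = \<rho>s
            \<and> (\<forall>z\<in>X0plus. rho z = \<rho>s \<longrightarrow> Atilde q R zs \<le> Atilde q R z)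
            \<and> Atilde q R zs = Inf {Atilde q R z | z. z \<in> X0plus \<and> rho z = \<rho>s}))"
proof -
  interpret unit_radius_weights q R
    using qpos Rlim Rpos by unfold_locales auto
  have equilibrium_eq: "(\<lambda>l. if l = 0 then 0 else N * qt q R l * \<mu> ^ l) = equilibrium q R N \<mu>"
    for N \<mu> by (simp add: fun_eq_iff equilibrium_def)
  show ?thesis
    unfolding Let_def equilibrium_eq
    by (intro conjI[OF ex_ex1I[OF ft_eq_1_exists[OF EQ]]] allI impI)
      (use ft_eq_1_unique in blast, use equilibrium_minimizer[OF EQ rhopos] in blast)
qed

end
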